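(* Fix $L\ge1$, rates $a_1,\ldots,a_L>0$, $\alpha,\beta>0$ with $\alpha a_i<1$ for all $i$, an $L$-particle configuration $\vec{\mathsf{x}}$, and $m\in\{1,\ldots,L\}$. With $\vec{\mathsf{y}}$, $\vec{\mathsf{x}}'$, $\mathsf{y}^{\dagger}_m$ and $\vec{\mathsf{y}}^{\,BG}$ constructed as described in the context, conditionally on $\vec{\mathsf{x}}$ the joint distribution of $(\mathsf{y}_{m-1},\mathsf{y}^{\dagger}_m)$ is the same as the joint distribution of $(\mathsf{y}_{m-1},\mathsf{y}^{BG}_m)$.
   Context: Fix $q\in(0,1)$; $(z;q)_k=\prod_{i=0}^{k-1}(1-zq^i)$. For $\gamma\in(0,1)$ and $m\in\mathbb{Z}_{\ge0}$ let $\mathbf{p}_{m,\gamma}(j)=\gamma^j(\gamma;q)_{m-j}\frac{(q;q)_m}{(q;q)_j(q;q)_{m-j}}$, $0\le j\le m$, and $\mathbf{p}_{+\infty,\gamma}(j)=\gamma^j(\gamma;q)_\infty/(q;q)_j$, $j\ge0$ (probability distributions). Configurations: $\vec{\mathsf{x}}=(\mathsf{x}_1>\ldots>\mathsf{x}_L)$ in $\mathbb{Z}$, with the convention $\mathsf{x}_0=+\infty$. Geometric $q$-TASEP move $\mathbf{G}_\alpha$ (rates $a_i$): each particle $i$ independently jumps to the right by $j$ with probability $\mathbf{p}_{\mathsf{x}_{i-1}-\mathsf{x}_i-1,\,a_i\alpha}(j)$. Bernoulli $q$-TASEP move $\mathbf{B}_\beta$: sequentially for $i=1,\ldots,L$,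 particle $i$ jumps right by one with probability $a_i\beta/(1+a_i\beta)$ if $i=1$ or if particle $i-1$ has jumped in this move, and with probability $(1-q^{\mathsf{x}_{i-1}-\mathsf{x}_i-1})a_i\beta/(1+a_i\beta)$ otherwise (gaps measured before the move); else it stays. Vertex weights $\mathsf{L}_{u,a,\nu}(i_1,j_1;i_2,j_2)$, $i_1,i_2\in\mathbb{Z}_{\ge0}$, $j_1,j_2\in\{0,1\}$, vanish unless $i_1+j_1=i_2+j_2$, and for $g\in\mathbb{Z}_{\ge0}$: $\mathsf{L}(g,0;g,0)=\frac{1-auq^g}{1-au}$, $\mathsf{L}(g,0;g-1,1)=\frac{-au(1-q^g)}{1-au}$, $\mathsf{L}(g,1;g,1)=\frac{\nu q^g-au}{1-au}$, $\mathsf{L}(g,1;g+1,0)=\frac{1-\nu q^g}{1-au}$. Construction: given $\vec{\mathsf{x}}$, let $\vec{\mathsf{y}}$ be obtained by applying $\mathbf{B}_\beta$ and $\vec{\mathsf{x}}'$ by applying $\mathbf{G}_\alpha$, with independent randomness. Given $\mathsf{x}_{m-1},\mathsf{y}_{m-1},\mathsf{x}'_m$, set $i_1=\mathsf{x}_{m-1}-\mathsf{x}'_m-1$, $j_1=\mathsf{y}_{m-1}-\mathsf{x}_{m-1}$, sample $j_2\in\{0,1\}$ with probability $\mathsf{L}_{-\beta,a_m,\alpha a_m}(i_1,j_1;i_1+j_1-j_2,j_2)$, and set $\mathsf{y}^\dagger_m:=\mathsf{x}'_m+j_2$. For $m=1$, $\mathsf{x}_0=\mathsf{y}_0=+\infty$,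 $i_1=+\infty$ (with $q^{i_1}=0$), and $j_1$ may be taken $0$ or $1$ (the weights do not depend on this choice). Finally $\vec{\mathsf{y}}^{\,BG}$ is obtained from $\vec{\mathsf{y}}$ by applying a further geometric move $\mathbf{G}_\alpha$ with randomness independent of everything above. *)

theory Defs
  imports "HOL-Probability.Probability"
begin

definition qpoch :: "real \<Rightarrow> real \<Rightarrow> nat \<Rightarrow> real" where
  "qpoch z q k = (\<Prod>i<k. (1 - z * q ^ i))"

definition qpoch_inf :: "real \<Rightarrow> real \<Rightarrow> real" where
  "qpoch_inf z q = (\<Prod>i. (1 - z * q ^ i))"

definition qpow :: "real \<Rightarrow> enat \<Rightarrow> real" where
  "qpow q g = (case g of enat n \<Rightarrow> q ^ n | \<infinity> \<Rightarrow> 0)"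

definition pgeo_fin :: "real \<Rightarrow> nat \<Rightarrow> real \<Rightarrow> nat \<Rightarrow> real" where
  "pgeo_fin q m \<gamma> j =
     (if j \<le> m then \<gamma> ^ j * qpoch \<gamma> q (m - j) * (qpoch q q m / (qpoch q q j * qpoch q q (m - j)))
      else 0)"

definition pgeo_inf :: "real \<Rightarrow> real \<Rightarrow> nat \<Rightarrow> real" where
  "pgeo_inf q \<gamma> j = \<gamma> ^ j * qpoch_inf \<gamma> q / qpoch q q j"

definition geo_pmf :: "real \<Rightarrow> enat \<Rightarrow> real \<Rightarrow> nat pmf" where
  "geo_pmf q g \<gamma> = embed_pmf (\<lambda>j. case g of enat m \<Rightarrow> pgeo_fin q m \<gamma> j | \<infinity> \<Rightarrow> pgeo_inf q \<gamma> j)"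

text \<open>A configuration x_1 > ... > x_L is a strictly decreasing int list xs with x_k = xs ! (k-1).
  The extended position returns None for k = 0 (convention x_0 = +infinity).\<close>
definition pos :: "int list \<Rightarrow> nat \<Rightarrow> int" where
  "pos xs k = xs ! (k - 1)"

definition epos :: "int list \<Rightarrow> nat \<Rightarrow> int option" where
  "epos xs k = (if k = 0 then None else Some (xs ! (k - 1)))"

definition config :: "nat \<Rightarrow> int list \<Rightarrow> bool" where
  "config L xs \<longleftrightarrow> length xs = L \<and> sorted_wrt (>) xs"

definition gap :: "int option \<Rightarrow> int \<Rightarrow> enat" where
  "gap prev x = (case prev of None \<Rightarrow> \<infinity> | Some y \<Rightarrow> enat (nat (y - x - 1)))"

text \<open>Jumps of particles k, k+1, ...; each is independent, with law p_{gap, a_k alpha},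
  gaps measured in the configuration before the move.\<close>
fun Gjumps :: "real \<Rightarrow> (nat \<Rightarrow> real) \<Rightarrow> real \<Rightarrow> nat \<Rightarrow> int option \<Rightarrow> int list \<Rightarrow> nat list pmf" where
  "Gjumps q a \<alpha> k prev [] = return_pmf []"
| "Gjumps q a \<alpha> k prev (x # xs) =
     do { j \<leftarrow> geo_pmf q (gap prev x) (a k * \<alpha>);
          js \<leftarrow> Gjumps q a \<alpha> (Suc k) (Some x) xs;
          return_pmf (j # js) }"

definition Gmove :: "real \<Rightarrow> (nat \<Rightarrow> real) \<Rightarrow> real \<Rightarrow> int list \<Rightarrow> int list pmf" where
  "Gmove q a \<alpha> xs = map_pmf (\<lambda>js. map2 (\<lambda>x j. x + int j) xs js) (Gjumps q a \<alpha> 1 None xs)"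

text \<open>Sequential update; the flag records whether the previous particle jumped in this move.\<close>
fun Bjumps :: "real \<Rightarrow> (nat \<Rightarrow> real) \<Rightarrow> real \<Rightarrow> nat \<Rightarrow> int option \<Rightarrow> bool \<Rightarrow> int list \<Rightarrow> bool list pmf" where
  "Bjumps q a \<beta> k prev pj [] = return_pmf []"
| "Bjumps q a \<beta> k prev pj (x # xs) =
     do { b \<leftarrow> bernoulli_pmf
                 ((case prev of None \<Rightarrow> 1
                    | Some y \<Rightarrow> (if pj then 1 else 1 - q ^ nat (y - x - 1)))
                  * (a k * \<beta> / (1 + a k * \<beta>)));
          bs \<leftarrow> Bjumps q a \<beta> (Suc k) (Some x) b xs;
          return_pmf (b # bs) }"

definition Bmove :: "real \<Rightarrow> (nat \<Rightarrow> real) \<Rightarrow> real \<Rightarrow> int list \<Rightarrow> int list pmf" where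
  "Bmove q a \<beta> xs =
     map_pmf (\<lambda>bs. map2 (\<lambda>x b. x + (if b then 1 else 0)) xs bs) (Bjumps q a \<beta> 1 None False xs)"

text \<open>Horizontal labels i1, i2 in Z_{>=0} or +infinity (q^{+infinity} = 0); vertical labels j1, j2 in {0,1}.\<close>
definition Lweight :: "real \<Rightarrow> real \<Rightarrow> real \<Rightarrow> real \<Rightarrow> enat \<Rightarrow> nat \<Rightarrow> enat \<Rightarrow> nat \<Rightarrow> real" where
  "Lweight q u a \<nu> i1 j1 i2 j2 =
     (if i1 + enat j1 \<noteq> i2 + enat j2 then 0
      else if j1 = 0 \<and> j2 = 0 then (1 - a * u * qpow q i1) / (1 - a * u)
      else if j1 = 0 \<and> j2 = 1 then - a * u * (1 - qpow q i1) / (1 - a * u)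
      else if j1 = 1 \<and> j2 = 1 then (\<nu> * qpow q i1 - a * u) / (1 - a * u)
      else if j1 = 1 \<and> j2 = 0 then (1 - \<nu> * qpow q i1) / (1 - a * u)
      else 0)"

text \<open>Joint law of (y_{m-1}, y^dagger_m) given x (y_0 = +infinity is represented by None).\<close>
definition dagger_pair :: "real \<Rightarrow> (nat \<Rightarrow> real) \<Rightarrow> real \<Rightarrow> real \<Rightarrow> int list \<Rightarrow> nat
    \<Rightarrow> (int option \<times> int) pmf" where
  "dagger_pair q a \<alpha> \<beta> xs m =
     do { ys \<leftarrow> Bmove q a \<beta> xs;
          xs' \<leftarrow> Gmove q a \<alpha> xs;
          let i1 = gap (epos xs (m - 1)) (pos xs' m);
          let j1 = (case (epos ys (m - 1), epos xs (m - 1)) of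
                      (Some y, Some x) \<Rightarrow> nat (y - x) | _ \<Rightarrow> 0);
          b \<leftarrow> bernoulli_pmf (Lweight q (- \<beta>) (a m) (\<alpha> * a m) i1 j1 (i1 + enat j1 - enat 1) 1);
          return_pmf (epos ys (m - 1), pos xs' m + (if b then 1 else 0)) }"

definition BG_pair :: "real \<Rightarrow> (nat \<Rightarrow> real) \<Rightarrow> real \<Rightarrow> real \<Rightarrow> int list \<Rightarrow> nat
    \<Rightarrow> (int option \<times> int) pmf" where
  "BG_pair q a \<alpha> \<beta> xs m =
     do { ys \<leftarrow> Bmove q a \<beta> xs;
          ysBG \<leftarrow> Gmove q a \<alpha> ys;
          return_pmf (epos ys (m - 1), pos ysBG m) }"

end

theory Submission
  imports Defs
begin

text \<open>Condition on whether particle \<open>m - 1\<close> jumped in the Bernoulli move. Both constructions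
  then only involve the gap \<open>g = x_(m-1) - x_m - 1\<close>, one geometric jump of law \<open>p_(g,\<gamma>)\<close> and one
  Bernoulli coin, and the claim becomes an identity of laws on \<open>\<nat>\<close>: a geometric jump followed by
  the coin with the vertex-weight probability has the same law as particle \<open>m\<close>'s coin in the
  Bernoulli move followed by a geometric jump from the updated gap. Comparing point masses, this is
  the recursion of \<open>p_(g,\<gamma>)\<close> in \<open>g\<close> if particle \<open>m - 1\<close> jumped, and a companion identity relating
  \<open>p_(g,\<gamma>)\<close> and \<open>p_(g-1,\<gamma>)\<close> if it did not. For \<open>m = 1\<close> the gap is infinite, the vertex weight is
  the constant \<open>a_1 \<beta> / (1 + a_1 \<beta>)\<close>, and the two random steps simply commute.\<close>

lemma qpoch_0 [simp]: "qpoch z q 0 = 1"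
  by (simp add: qpoch_def)

lemma qpoch_Suc: "qpoch z q (Suc n) = qpoch z q n * (1 - z * q ^ n)"
  by (simp add: qpoch_def)

lemma qpoch_pos:
  assumes "0 \<le> z" "z < 1" "0 < q" "q < 1"
  shows "0 < qpoch z q n"
proof (induction n)
  case (Suc n)
  have "z * q ^ n \<le> z"
    using assms by (simp add: mult_left_le power_le_one)
  with Suc assms(2) show ?case
    by (simp add: qpoch_Suc)
qed simp

lemma qpoch_q_pos: "0 < q \<Longrightarrow> q < 1 \<Longrightarrow> 0 < qpoch q q n"
  by (simp add: qpoch_pos)

lemma one_minus_q_power_Suc_neq_0:
  assumes "0 < q" "q < (1::real)"
  shows "1 - q * q ^ n \<noteq> 0"
proof -
  have "q * q ^ n \<le> q"
    using assms by (simp add: mult_left_le power_le_one)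
  with assms show ?thesis
    by linarith
qed

lemma pgeo_fin_0: "0 < q \<Longrightarrow> q < 1 \<Longrightarrow> pgeo_fin q n \<gamma> 0 = qpoch \<gamma> q n"
  using qpoch_q_pos[of q n] by (simp add: pgeo_fin_def)

lemma pgeo_fin_top: "0 < q \<Longrightarrow> q < 1 \<Longrightarrow> pgeo_fin q n \<gamma> n = \<gamma> ^ n"
  using qpoch_q_pos[of q n] by (simp add: pgeo_fin_def)

lemma pgeo_fin_eq_0: "n < k \<Longrightarrow> pgeo_fin q n \<gamma> k = 0"
  by (simp add: pgeo_fin_def)

lemma pgeo_fin_nonneg:
  assumes "0 < q" "q < 1" "0 \<le> \<gamma>" "\<gamma> < 1"
  shows "0 \<le> pgeo_fin q n \<gamma> k"
  using assms qpoch_q_pos[of q] qpoch_pos[of \<gamma> q]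
  unfolding pgeo_fin_def by (simp add: less_imp_le)

text \<open>Writing each weight as \<open>\<gamma>^k (\<gamma>;q)_{n-k}\<close> times a q-binomial coefficient, the
  following two identities reduce to rational-function identities in \<open>q^k\<close> and \<open>q^(n-k)\<close>.\<close>

lemma pgeo_fin_Suc_Suc:
  assumes q: "0 < q" "q < 1"
  shows "pgeo_fin q (Suc (Suc j + r)) \<gamma> (Suc j) =
     pgeo_fin q (Suc j + r) \<gamma> (Suc j) * (1 - \<gamma> * q ^ r) + pgeo_fin q (Suc j + r) \<gamma> j * \<gamma> * q ^ Suc r"
proof -
  define A B C D u v t
    where "A = qpoch \<gamma> q r" "B = qpoch q q (Suc (j + r))" "C = qpoch q q j" "D = qpoch q q r"
      "u = 1 - q * q ^ j" "v = 1 - q * q ^ r" "t = 1 - \<gamma> * q ^ r"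
  note defs = A_B_C_D_u_v_t_def
  have "u \<noteq> 0" "v \<noteq> 0"
    using one_minus_q_power_Suc_neq_0[OF q] by (simp_all add: defs)
  moreover have "C \<noteq> 0" "D \<noteq> 0"
    using qpoch_q_pos[OF q] unfolding defs by (metis less_irrefl)+
  moreover have "Suc (Suc j + r) - Suc j = Suc r" "Suc j + r - Suc j = r" "Suc j + r - j = Suc r"
    by auto
  then have eqs: "pgeo_fin q (Suc (Suc j + r)) \<gamma> (Suc j) =
      \<gamma> ^ Suc j * (A * t) * (B * (1 - (1 - u) * (1 - v)) / (C * u * (D * v)))"
    "pgeo_fin q (Suc j + r) \<gamma> (Suc j) = \<gamma> ^ Suc j * A * (B / (C * u * D))"
    "pgeo_fin q (Suc j + r) \<gamma> j = \<gamma> ^ j * (A * t) * (B / (C * (D * v)))"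
    "q ^ Suc r = 1 - v" "1 - \<gamma> * q ^ r = t"
    unfolding pgeo_fin_def defs by (simp_all add: qpoch_Suc power_add algebra_simps)
  ultimately show ?thesis
    unfolding eqs by (simp add: field_simps)
qed

lemma pgeo_fin_shift:
  assumes q: "0 < q" "q < 1"
  shows "q ^ (Suc j + r) * pgeo_fin q (Suc j + r) \<gamma> (Suc j) + (1 - q ^ (Suc j + r)) * pgeo_fin q (j + r) \<gamma> j
     = q ^ r * pgeo_fin q (Suc j + r) \<gamma> (Suc j) + (1 - q ^ Suc r) * pgeo_fin q (Suc j + r) \<gamma> j"
proof -
  define A B C D u v t s
    where "A = qpoch \<gamma> q r" "B = qpoch q q (j + r)" "C = qpoch q q j" "D = qpoch q q r"
      "u = 1 - q * q ^ j" "v = 1 - q * q ^ r" "t = q ^ r" "s = 1 - \<gamma> * q ^ r"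
  note defs = A_B_C_D_u_v_t_s_def
  have "u \<noteq> 0" "v \<noteq> 0"
    using one_minus_q_power_Suc_neq_0[OF q] by (simp_all add: defs)
  moreover have "C \<noteq> 0" "D \<noteq> 0"
    using qpoch_q_pos[OF q] unfolding defs by (metis less_irrefl)+
  moreover have "Suc j + r - Suc j = r" "Suc j + r - j = Suc r" "j + r - j = r"
    by auto
  then have eqs: "pgeo_fin q (Suc j + r) \<gamma> (Suc j) = \<gamma> ^ Suc j * A * (B * (1 - (1 - u) * t) / (C * u * D))"
    "pgeo_fin q (Suc j + r) \<gamma> j = \<gamma> ^ j * (A * s) * (B * (1 - (1 - u) * t) / (C * (D * v)))"
    "pgeo_fin q (j + r) \<gamma> j = \<gamma> ^ j * A * (B / (C * D))"
    "q ^ Suc r = 1 - v" "q ^ (Suc j + r) = (1 - u) * t" "s = 1 - \<gamma> * t" "q ^ r = t"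
    unfolding pgeo_fin_def defs by (simp_all add: qpoch_Suc power_add algebra_simps)
  ultimately show ?thesis
    unfolding eqs by (simp add: field_simps)
qed

lemma pgeo_fin_Suc:
  assumes q: "0 < q" "q < 1"
  shows "pgeo_fin q (Suc n) \<gamma> k = pgeo_fin q n \<gamma> k * (1 - \<gamma> * q ^ (n - k))
     + (if 1 \<le> k then pgeo_fin q n \<gamma> (k - 1) * \<gamma> * q ^ (n - (k - 1)) else 0)"
proof (cases k)
  case 0
  with q show ?thesis
    by (simp add: pgeo_fin_0 qpoch_Suc)
next
  case (Suc j)
  consider "j < n" | "j = n" | "n < j"
    by linarith
  then show ?thesis
  proof cases
    case 1
    then obtain r where "n = Suc j + r"
      using less_iff_Suc_add by auto
    with Suc pgeo_fin_Suc_Suc[OF q, of j r] show ?thesis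
      by simp
  qed (use Suc q in \<open>simp_all add: pgeo_fin_top pgeo_fin_eq_0\<close>)
qed


lemma pgeo_fin_thinning:
  assumes q: "0 < q" "q < 1"
  shows "pgeo_fin q n \<gamma> k * q ^ (n - k) + (if 1 \<le> k then pgeo_fin q n \<gamma> (k - 1) * (1 - q ^ (n - (k - 1))) else 0)
     = (if 1 \<le> k then (1 - q ^ n) * pgeo_fin q (n - 1) \<gamma> (k - 1) else 0) + q ^ n * pgeo_fin q n \<gamma> k"
proof (cases k)
  case (Suc j)
  consider "j < n" | "j = n" | "n < j"
    by linarith
  then show ?thesis
  proof cases
    case 1
    then obtain r where "n = Suc j + r"
      using less_iff_Suc_add by auto
    with Suc pgeo_fin_shift[OF q, of j r] show ?thesis
      by (simp add: algebra_simps)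
  next
    case 2
    with Suc q show ?thesis
      by (cases n) (simp_all add: pgeo_fin_eq_0)
  qed (use Suc in \<open>simp add: pgeo_fin_eq_0\<close>)
qed simp


lemma sum_pgeo_fin:
  assumes q: "0 < q" "q < 1"
  shows "(\<Sum>k\<le>n. pgeo_fin q n \<gamma> k) = 1"
proof (induction n)
  case 0
  with q show ?case
    by (simp add: pgeo_fin_top)
next
  case (Suc n)
  have "(\<Sum>k\<le>Suc n. pgeo_fin q (Suc n) \<gamma> k) =
     (\<Sum>k\<le>Suc n. pgeo_fin q n \<gamma> k * (1 - \<gamma> * q ^ (n - k))) +
     (\<Sum>k\<le>Suc n. (if 1 \<le> k then pgeo_fin q n \<gamma> (k - 1) * \<gamma> * q ^ (n - (k - 1)) else 0))"
    by (simp add: pgeo_fin_Suc[OF q] sum.distrib)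
  also have "(\<Sum>k\<le>Suc n. pgeo_fin q n \<gamma> k * (1 - \<gamma> * q ^ (n - k))) = (\<Sum>k\<le>n. pgeo_fin q n \<gamma> k * (1 - \<gamma> * q ^ (n - k)))"
    by (simp add: pgeo_fin_eq_0)
  also have "(\<Sum>k\<le>Suc n. (if 1 \<le> k then pgeo_fin q n \<gamma> (k - 1) * \<gamma> * q ^ (n - (k - 1)) else 0))
      = (\<Sum>k\<le>n. pgeo_fin q n \<gamma> k * \<gamma> * q ^ (n - k))"
    by (subst sum.atMost_Suc_shift) simp
  also have "(\<Sum>k\<le>n. pgeo_fin q n \<gamma> k * (1 - \<gamma> * q ^ (n - k))) + (\<Sum>k\<le>n. pgeo_fin q n \<gamma> k * \<gamma> * q ^ (n - k))
      = (\<Sum>k\<le>n. pgeo_fin q n \<gamma> k)"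
    by (simp add: sum.distrib[symmetric] algebra_simps)
  finally show ?case
    using Suc by simp
qed

lemma pmf_geo_pmf_enat:
  assumes q: "0 < q" "q < 1" and \<gamma>: "0 \<le> \<gamma>" "\<gamma> < 1"
  shows "pmf (geo_pmf q (enat n) \<gamma>) k = pgeo_fin q n \<gamma> k"
proof -
  have "(\<integral>\<^sup>+j. ennreal (pgeo_fin q n \<gamma> j) \<partial>count_space UNIV) = (\<Sum>j\<le>n. ennreal (pgeo_fin q n \<gamma> j))"
    by (rule nn_integral_count_space') (auto simp: pgeo_fin_eq_0)
  also have "\<dots> = 1"
    using sum_pgeo_fin[OF q, of n] pgeo_fin_nonneg[OF q \<gamma>]
    by (simp add: sum_ennreal[symmetric])
  finally show ?thesis
    unfolding geo_pmf_def using pgeo_fin_nonneg[OF q \<gamma>] by (simp add: pmf_embed_pmf)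
qed


lemma set_geo_pmf_enat:
  assumes "0 < q" "q < 1" "0 \<le> \<gamma>" "\<gamma> < 1" "j \<in> set_pmf (geo_pmf q (enat n) \<gamma>)"
  shows "j \<le> n"
proof (rule ccontr)
  assume "\<not> j \<le> n"
  with assms(1-4) have "pmf (geo_pmf q (enat n) \<gamma>) j = 0"
    by (simp add: pmf_geo_pmf_enat pgeo_fin_eq_0)
  with assms(5) show False
    by (simp add: set_pmf_iff)
qed

lemma pmf_map_Suc: "pmf (map_pmf Suc p) k = (if k = 0 then 0 else pmf p (k - 1))"
proof (cases k)
  case 0
  have "0 \<notin> set_pmf (map_pmf Suc p)"
    by auto
  with 0 show ?thesis
    by (simp add: pmf_eq_0_set_pmf)
qed (simp add: pmf_map_inj')

lemma pmf_bind_bernoulli: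
  "0 \<le> c \<Longrightarrow> c \<le> 1 \<Longrightarrow> pmf (bind_pmf (bernoulli_pmf c) f) x = c * pmf (f True) x + (1 - c) * pmf (f False) x"
  by (simp add: pmf_bind mult.commute)

lemma pmf_add_bernoulli:
  assumes "0 \<le> w" "w \<le> 1"
  shows "pmf (map_pmf (\<lambda>b. j + of_bool b) (bernoulli_pmf w)) (k::nat) =
    (if k = j then 1 - w else if k = Suc j then w else 0)"
proof -
  have "(\<lambda>b. j + of_bool b) -` {k} = (if k = j then {False} else if k = Suc j then {True} else {})"
    by (auto split: if_splits simp: of_bool_def)
  with assms show ?thesis
    by (simp add: pmf_map measure_measure_pmf_finite)
qed

lemma pmf_bind_add_bernoulli:
  assumes "\<And>j. 0 \<le> w j" "\<And>j. w j \<le> 1"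
  shows "pmf (bind_pmf p (\<lambda>j. map_pmf (\<lambda>b. j + of_bool b) (bernoulli_pmf (w j)))) (k::nat)
     = pmf p k * (1 - w k) + (if 1 \<le> k then pmf p (k - 1) * w (k - 1) else 0)"
proof -
  have "pmf (bind_pmf p (\<lambda>j. map_pmf (\<lambda>b. j + of_bool b) (bernoulli_pmf (w j)))) k
     = (\<integral>j. (if k = j then 1 - w j else if k = Suc j then w j else 0) \<partial>measure_pmf p)"
    by (simp add: pmf_bind pmf_add_bernoulli assms)
  also have "\<dots> = (\<Sum>j\<in>{k, k - 1}. pmf p j *\<^sub>R (if k = j then 1 - w j else if k = Suc j then w j else 0))"
    by (rule integral_measure_pmf) (auto split: if_splits)
  also have "\<dots> = pmf p k * (1 - w k) + (if 1 \<le> k then pmf p (k - 1) * w (k - 1) else 0)"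
    by (cases k) auto
  finally show ?thesis .
qed

lemma geo_pmf_add_bernoulli_after_jump:
  assumes q: "0 < q" "q < 1" and \<gamma>: "0 \<le> \<gamma>" "\<gamma> < 1" and c: "0 \<le> c"
  shows "bind_pmf (geo_pmf q (enat g) \<gamma>)
      (\<lambda>j. map_pmf (\<lambda>b. j + of_bool b) (bernoulli_pmf ((\<gamma> * q ^ (g - j) + c) / (1 + c))))
    = bind_pmf (bernoulli_pmf (c / (1 + c)))
      (\<lambda>b. if b then map_pmf Suc (geo_pmf q (enat g) \<gamma>) else geo_pmf q (enat (Suc g)) \<gamma>)"
proof (rule pmf_eqI)
  fix k :: nat
  have "\<gamma> * q ^ n \<le> 1" for n
    using q \<gamma> by (simp add: mult_le_one power_le_one)
  with q \<gamma> c have w: "0 \<le> (\<gamma> * q ^ (g - j) + c) / (1 + c)" "(\<gamma> * q ^ (g - j) + c) / (1 + c) \<le> 1" for j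
    by simp_all
  from c have cb: "0 \<le> c / (1 + c)" "c / (1 + c) \<le> 1" and c1: "1 + c \<noteq> 0"
    by simp_all
  show "pmf (bind_pmf (geo_pmf q (enat g) \<gamma>)
      (\<lambda>j. map_pmf (\<lambda>b. j + of_bool b) (bernoulli_pmf ((\<gamma> * q ^ (g - j) + c) / (1 + c))))) k
    = pmf (bind_pmf (bernoulli_pmf (c / (1 + c)))
      (\<lambda>b. if b then map_pmf Suc (geo_pmf q (enat g) \<gamma>) else geo_pmf q (enat (Suc g)) \<gamma>)) k"
    unfolding pmf_bind_add_bernoulli[OF w] pmf_bind_bernoulli[OF cb]
    using c1 by (cases k) (simp_all add: pmf_map_Suc pmf_geo_pmf_enat[OF q \<gamma>] pgeo_fin_Suc[OF q] field_simps)
qed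

lemma geo_pmf_add_bernoulli_no_jump:
  assumes q: "0 < q" "q < 1" and \<gamma>: "0 \<le> \<gamma>" "\<gamma> < 1" and c: "0 \<le> c"
  shows "bind_pmf (geo_pmf q (enat g) \<gamma>)
      (\<lambda>j. map_pmf (\<lambda>b. j + of_bool b) (bernoulli_pmf (c * (1 - q ^ (g - j)) / (1 + c))))
    = bind_pmf (bernoulli_pmf ((1 - q ^ g) * c / (1 + c)))
      (\<lambda>b. if b then map_pmf Suc (geo_pmf q (enat (g - 1)) \<gamma>) else geo_pmf q (enat g) \<gamma>)"
proof (rule pmf_eqI)
  fix k :: nat
  have qn: "0 \<le> q ^ n" "q ^ n \<le> 1" for n
    using q by (simp_all add: power_le_one)
  have w: "0 \<le> c * (1 - q ^ n) / (1 + c)" "c * (1 - q ^ n) / (1 + c) \<le> 1" for n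
    using c qn[of n] mult_left_le[of "1 - q ^ n" c] by simp_all
  define p p' where "p = pgeo_fin q g \<gamma>" and "p' = pgeo_fin q (g - 1) \<gamma>"
  have "p k * (1 - c * (1 - q ^ (g - k)) / (1 + c))
        + (if 1 \<le> k then p (k - 1) * (c * (1 - q ^ (g - (k - 1))) / (1 + c)) else 0)
      = (p k + c * (p k * q ^ (g - k) + (if 1 \<le> k then p (k - 1) * (1 - q ^ (g - (k - 1))) else 0))) / (1 + c)"
    using c by (cases "1 \<le> k") (simp_all add: field_simps add_nonneg_eq_0_iff)
  also have "\<dots> = (p k + c * ((if 1 \<le> k then (1 - q ^ g) * p' (k - 1) else 0) + q ^ g * p k)) / (1 + c)"
    unfolding p_def p'_def pgeo_fin_thinning[OF q] ..
  also have "\<dots> = (1 - q ^ g) * c / (1 + c) * (if k = 0 then 0 else p' (k - 1))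
      + (1 - (1 - q ^ g) * c / (1 + c)) * p k"
    using c by (cases "1 \<le> k") (simp_all add: field_simps add_nonneg_eq_0_iff)
  finally have pmf_eq: "p k * (1 - c * (1 - q ^ (g - k)) / (1 + c))
        + (if 1 \<le> k then p (k - 1) * (c * (1 - q ^ (g - (k - 1))) / (1 + c)) else 0)
      = (1 - q ^ g) * c / (1 + c) * (if k = 0 then 0 else p' (k - 1)) + (1 - (1 - q ^ g) * c / (1 + c)) * p k" .
  have w_g: "0 \<le> (1 - q ^ g) * c / (1 + c)" "(1 - q ^ g) * c / (1 + c) \<le> 1"
    using w[of g] by (simp_all add: mult.commute)
  from pmf_eq[unfolded p_def p'_def] show "pmf (bind_pmf (geo_pmf q (enat g) \<gamma>)
      (\<lambda>j. map_pmf (\<lambda>b. j + of_bool b) (bernoulli_pmf (c * (1 - q ^ (g - j)) / (1 + c))))) k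
    = pmf (bind_pmf (bernoulli_pmf ((1 - q ^ g) * c / (1 + c)))
      (\<lambda>b. if b then map_pmf Suc (geo_pmf q (enat (g - 1)) \<gamma>) else geo_pmf q (enat g) \<gamma>)) k"
    unfolding pmf_bind_add_bernoulli[OF w] pmf_bind_bernoulli[OF w_g] if_True if_False
      pmf_map_Suc pmf_geo_pmf_enat[OF q \<gamma>] .
qed

lemma length_Gjumps: "js \<in> set_pmf (Gjumps q a \<alpha> k prev xs) \<Longrightarrow> length js = length xs"
  by (induction xs arbitrary: js k prev) auto

lemma length_Bjumps: "bs \<in> set_pmf (Bjumps q a \<beta> k prev pj xs) \<Longrightarrow> length bs = length xs"
  by (induction xs arbitrary: bs k prev pj) auto

lemma Gjumps_nth:
  "n < length xs \<Longrightarrow> map_pmf (\<lambda>js. js ! n) (Gjumps q a \<alpha> k prev xs) =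
     geo_pmf q (gap (if n = 0 then prev else Some (xs ! (n - 1))) (xs ! n)) (a (k + n) * \<alpha>)"
proof (induction xs arbitrary: n k prev)
  case (Cons x xs)
  show ?case
  proof (cases n)
    case 0
    then show ?thesis
      by (simp add: map_bind_pmf bind_return_pmf')
  next
    case (Suc n')
    with Cons.prems have "n' < length xs"
      by simp
    with Suc Cons.IH[of n' "Suc k" "Some x"] show ?thesis
      by (cases n') (simp_all add: map_bind_pmf map_pmf_def[symmetric] map_pmf_comp)
  qed
qed simp

lemma Gmove_pos:
  assumes "1 \<le> m" "m \<le> length xs"
  shows "map_pmf (\<lambda>ys. pos ys m) (Gmove q a \<alpha> xs) =
    map_pmf (\<lambda>j. xs ! (m - 1) + int j) (geo_pmf q (gap (epos xs (m - 1)) (xs ! (m - 1))) (a m * \<alpha>))"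
proof -
  have "map_pmf (\<lambda>ys. pos ys m) (Gmove q a \<alpha> xs) =
     map_pmf (\<lambda>j. xs ! (m - 1) + int j) (map_pmf (\<lambda>js. js ! (m - 1)) (Gjumps q a \<alpha> 1 None xs))"
    unfolding Gmove_def map_pmf_comp
    by (rule map_pmf_cong) (use assms in \<open>auto simp: pos_def dest: length_Gjumps\<close>)
  also have "\<dots> = map_pmf (\<lambda>j. xs ! (m - 1) + int j) (geo_pmf q (gap (epos xs (m - 1)) (xs ! (m - 1))) (a m * \<alpha>))"
    using assms by (subst Gjumps_nth) (auto simp: epos_def)
  finally show ?thesis .
qed

lemma Bjumps_nth_0:
  "map_pmf (\<lambda>bs. bs ! 0) (Bjumps q a \<beta> k prev pj (x # xs)) =
   bernoulli_pmf ((case prev of None \<Rightarrow> 1 | Some y \<Rightarrow> (if pj then 1 else 1 - q ^ nat (y - x - 1)))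
     * (a k * \<beta> / (1 + a k * \<beta>)))"
  by (simp add: map_bind_pmf bind_return_pmf')

lemma Bjumps_nth_pair:
  "Suc n < length xs \<Longrightarrow>
   map_pmf (\<lambda>bs. (bs ! n, bs ! Suc n)) (Bjumps q a \<beta> k prev pj xs) =
   bind_pmf (map_pmf (\<lambda>bs. bs ! n) (Bjumps q a \<beta> k prev pj xs))
     (\<lambda>b. map_pmf (Pair b) (bernoulli_pmf ((if b then 1 else 1 - q ^ nat (xs ! n - xs ! Suc n - 1))
        * (a (k + Suc n) * \<beta> / (1 + a (k + Suc n) * \<beta>)))))"
proof (induction xs arbitrary: n k prev pj)
  case (Cons x xs)
  show ?case
  proof (cases n)
    case 0
    with Cons.prems obtain x' xs' where xs: "xs = x' # xs'"
      by (cases xs) auto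
    show ?thesis
      unfolding 0 xs nth_Cons_0 nth_Cons_Suc
      by (simp add: map_bind_pmf bind_return_pmf bind_assoc_pmf bind_map_pmf map_pmf_def)
  next
    case (Suc n')
    with Cons.prems have "Suc n' < length xs"
      by simp
    then show ?thesis
      unfolding Suc nth_Cons_Suc
      by (simp add: Cons.IH map_bind_pmf bind_map_pmf map_pmf_comp bind_assoc_pmf map_pmf_def[symmetric])
  qed
qed simp

lemma Lweight_jumped:
  "Lweight q (- \<beta>) a \<nu> (enat r) 1 (enat r + enat 1 - enat 1) 1 = (\<nu> * q ^ r + a * \<beta>) / (1 + a * \<beta>)"
  by (simp add: Lweight_def qpow_def)

lemma Lweight_not_jumped:
  "Lweight q (- \<beta>) a \<nu> (enat r) 0 (enat r + enat 0 - enat 1) 1 = a * \<beta> * (1 - q ^ r) / (1 + a * \<beta>)"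
  by (cases r) (simp_all add: Lweight_def qpow_def one_enat_def[symmetric] enat_0_iff)

lemma Lweight_infinity:
  "Lweight q (- \<beta>) a \<nu> \<infinity> 0 (\<infinity> + enat 0 - enat 1) 1 = a * \<beta> / (1 + a * \<beta>)"
  by (simp add: Lweight_def qpow_def)

text \<open>Given \<open>x_(m-1) = X\<close>, \<open>x_m = x\<close> and whether particle \<open>m - 1\<close> jumped in the Bernoulli move
  (\<open>b\<^sub>1\<close>), the conditional laws of \<open>(y_(m-1), y\<^sup>\<dagger>_m)\<close> and, if moreover particle \<open>m\<close> jumped
  iff \<open>b\<^sub>2\<close>, of \<open>(y_(m-1), y\<^sup>B\<^sup>G_m)\<close>; here \<open>a\<close> stands for the rate \<open>a_m\<close>.\<close>

definition dagger_fiber :: "real \<Rightarrow> real \<Rightarrow> real \<Rightarrow> real \<Rightarrow> int \<Rightarrow> int \<Rightarrow> bool \<Rightarrow> (int option \<times> int) pmf" where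
  "dagger_fiber q a \<alpha> \<beta> X x b\<^sub>1 =
     do { j \<leftarrow> geo_pmf q (gap (Some X) x) (a * \<alpha>);
          let i\<^sub>1 = gap (Some X) (x + int j);
          b \<leftarrow> bernoulli_pmf (Lweight q (- \<beta>) a (\<alpha> * a) i\<^sub>1 (of_bool b\<^sub>1) (i\<^sub>1 + enat (of_bool b\<^sub>1) - enat 1) 1);
          return_pmf (Some (X + of_bool b\<^sub>1), x + int j + of_bool b) }"

definition BG_fiber :: "real \<Rightarrow> real \<Rightarrow> real \<Rightarrow> int \<Rightarrow> int \<Rightarrow> bool \<Rightarrow> bool \<Rightarrow> (int option \<times> int) pmf" where
  "BG_fiber q a \<alpha> X x b\<^sub>1 b\<^sub>2 =
     map_pmf (\<lambda>j. (Some (X + of_bool b\<^sub>1), x + of_bool b\<^sub>2 + int j))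
       (geo_pmf q (gap (Some (X + of_bool b\<^sub>1)) (x + of_bool b\<^sub>2)) (a * \<alpha>))"

lemma dagger_fiber_eq_bind_BG_fiber:
  assumes q: "0 < q" "q < 1" and \<gamma>: "0 \<le> a * \<alpha>" "a * \<alpha> < 1" and c: "0 \<le> a * \<beta>"
    and "x < X"
  shows "dagger_fiber q a \<alpha> \<beta> X x b\<^sub>1 =
    bind_pmf (bernoulli_pmf ((if b\<^sub>1 then 1 else 1 - q ^ nat (X - x - 1)) * (a * \<beta> / (1 + a * \<beta>))))
      (BG_fiber q a \<alpha> X x b\<^sub>1)"
proof -
  define g where "g = nat (X - x - 1)"
  define T where "T = (\<lambda>k::nat. (Some (X + of_bool b\<^sub>1), x + int k))"
  have X: "X = x + int g + 1"
    using \<open>x < X\<close> by (simp add: g_def)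
  have gap_j: "gap (Some X) (x + int j) = enat (g - j)" if "j \<in> set_pmf (geo_pmf q (enat g) (a * \<alpha>))" for j
    using set_geo_pmf_enat[OF q \<gamma> that] X by (simp add: gap_def nat_diff_distrib)
  have T_add: "T (j + of_bool b) = (Some (X + of_bool b\<^sub>1), x + int j + of_bool b)" for j b
    by (cases b) (simp_all add: T_def)
  have "dagger_fiber q a \<alpha> \<beta> X x b\<^sub>1 = map_pmf T (bind_pmf (geo_pmf q (enat g) (a * \<alpha>))
      (\<lambda>j. map_pmf (\<lambda>b. j + of_bool b) (bernoulli_pmf
         (if b\<^sub>1 then (a * \<alpha> * q ^ (g - j) + a * \<beta>) / (1 + a * \<beta>)
          else a * \<beta> * (1 - q ^ (g - j)) / (1 + a * \<beta>)))))"
    unfolding dagger_fiber_def map_bind_pmf map_pmf_comp Let_def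
  proof (rule bind_pmf_cong)
    show "geo_pmf q (gap (Some X) x) (a * \<alpha>) = geo_pmf q (enat g) (a * \<alpha>)"
      by (simp add: gap_def g_def)
  next
    fix j
    assume j: "j \<in> set_pmf (geo_pmf q (enat g) (a * \<alpha>))"
    show "bernoulli_pmf (Lweight q (- \<beta>) a (\<alpha> * a) (gap (Some X) (x + int j)) (of_bool b\<^sub>1)
          (gap (Some X) (x + int j) + enat (of_bool b\<^sub>1) - enat 1) 1) \<bind>
        (\<lambda>b. return_pmf (Some (X + of_bool b\<^sub>1), x + int j + of_bool b)) = 
      map_pmf (\<lambda>b. T (j + of_bool b)) (bernoulli_pmf
         (if b\<^sub>1 then (a * \<alpha> * q ^ (g - j) + a * \<beta>) / (1 + a * \<beta>)
          else a * \<beta> * (1 - q ^ (g - j)) / (1 + a * \<beta>)))"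
      by (cases b\<^sub>1) (simp_all only: gap_j[OF j] of_bool_eq Lweight_jumped Lweight_not_jumped,
          simp_all add: map_pmf_def T_add algebra_simps)
  qed
  also have "\<dots> = map_pmf T (bind_pmf (bernoulli_pmf ((if b\<^sub>1 then 1 else 1 - q ^ g) * (a * \<beta> / (1 + a * \<beta>))))
      (\<lambda>b\<^sub>2. if b\<^sub>1 then (if b\<^sub>2 then map_pmf Suc (geo_pmf q (enat g) (a * \<alpha>)) else geo_pmf q (enat (Suc g)) (a * \<alpha>))
             else (if b\<^sub>2 then map_pmf Suc (geo_pmf q (enat (g - 1)) (a * \<alpha>)) else geo_pmf q (enat g) (a * \<alpha>))))"
    using geo_pmf_add_bernoulli_after_jump[OF q \<gamma> c, of g] geo_pmf_add_bernoulli_no_jump[OF q \<gamma> c, of g]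
    by (cases b\<^sub>1) simp_all
  also have "\<dots> = bind_pmf (bernoulli_pmf ((if b\<^sub>1 then 1 else 1 - q ^ g) * (a * \<beta> / (1 + a * \<beta>))))
      (BG_fiber q a \<alpha> X x b\<^sub>1)"
    unfolding map_bind_pmf
  proof (rule bind_pmf_cong)
    fix b\<^sub>2
    show "map_pmf T (if b\<^sub>1 then (if b\<^sub>2 then map_pmf Suc (geo_pmf q (enat g) (a * \<alpha>)) else geo_pmf q (enat (Suc g)) (a * \<alpha>))
             else (if b\<^sub>2 then map_pmf Suc (geo_pmf q (enat (g - 1)) (a * \<alpha>)) else geo_pmf q (enat g) (a * \<alpha>)))
      = BG_fiber q a \<alpha> X x b\<^sub>1 b\<^sub>2"
      unfolding BG_fiber_def using X nat_diff_distrib'[of "int g" 1]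
      by (cases b\<^sub>1; cases b\<^sub>2) (simp_all add: map_pmf_comp T_def gap_def algebra_simps nat_add_distrib)
  qed simp
  finally show ?thesis
    by (simp add: g_def)
qed

lemma bind_Gmove_pos:
  assumes "1 \<le> m" "m \<le> length xs"
  shows "bind_pmf (Gmove q a \<alpha> xs) (\<lambda>xs'. f (pos xs' m)) =
    bind_pmf (geo_pmf q (gap (epos xs (m - 1)) (xs ! (m - 1))) (a m * \<alpha>)) (\<lambda>j. f (xs ! (m - 1) + int j))"
proof -
  have "bind_pmf (Gmove q a \<alpha> xs) (\<lambda>xs'. f (pos xs' m)) = bind_pmf (map_pmf (\<lambda>ys. pos ys m) (Gmove q a \<alpha> xs)) f"
    by (simp add: bind_map_pmf)
  then show ?thesis
    by (simp add: Gmove_pos[OF assms] bind_map_pmf)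
qed

lemma nth_Bmove_support:
  assumes "bs \<in> set_pmf (Bjumps q a \<beta> k prev pj xs)" "i < length xs"
  shows "map2 (\<lambda>x b. x + (if b then 1 else 0)) xs bs ! i = xs ! i + of_bool (bs ! i)"
  using assms by (simp add: length_Bjumps)

lemma epos_Bmove_support:
  assumes "bs \<in> set_pmf (Bjumps q a \<beta> k prev pj xs)" "i < length xs"
  shows "epos (map2 (\<lambda>x b. x + (if b then 1 else 0)) xs bs) (Suc i) = Some (xs ! i + of_bool (bs ! i))"
  using nth_Bmove_support[OF assms] by (simp add: epos_def)

lemma dagger_pair_eq_geo:
  assumes "1 \<le> m" "m \<le> length xs"
  shows "dagger_pair q a \<alpha> \<beta> xs m =
     do { ys \<leftarrow> Bmove q a \<beta> xs;
          j \<leftarrow> geo_pmf q (gap (epos xs (m - 1)) (xs ! (m - 1))) (a m * \<alpha>);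
          let i\<^sub>1 = gap (epos xs (m - 1)) (xs ! (m - 1) + int j);
          let j\<^sub>1 = (case (epos ys (m - 1), epos xs (m - 1)) of (Some y, Some x) \<Rightarrow> nat (y - x) | _ \<Rightarrow> 0);
          b \<leftarrow> bernoulli_pmf (Lweight q (- \<beta>) (a m) (\<alpha> * a m) i\<^sub>1 j\<^sub>1 (i\<^sub>1 + enat j\<^sub>1 - enat 1) 1);
          return_pmf (epos ys (m - 1), xs ! (m - 1) + int j + (if b then 1 else 0)) }"
  unfolding dagger_pair_def Let_def by (subst bind_Gmove_pos[OF assms]) (rule refl)

lemma dagger_pair_Suc_Suc:
  assumes "Suc i < length xs"
  shows "dagger_pair q a \<alpha> \<beta> xs (Suc (Suc i)) = bind_pmf (map_pmf (\<lambda>bs. bs ! i) (Bjumps q a \<beta> 1 None False xs))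
    (dagger_fiber q (a (Suc (Suc i))) \<alpha> \<beta> (xs ! i) (xs ! Suc i))"
proof -
  have m: "1 \<le> Suc (Suc i)" "Suc (Suc i) \<le> length xs"
    using assms by simp_all
  have "epos xs (Suc i) = Some (xs ! i)"
    by (simp add: epos_def)
  with assms show ?thesis
    unfolding dagger_pair_eq_geo[OF m] Bmove_def bind_map_pmf Let_def
    by (auto intro!: bind_pmf_cong simp: epos_Bmove_support dagger_fiber_def Let_def)
qed

lemma BG_pair_Suc_Suc:
  assumes "Suc i < length xs"
  shows "BG_pair q a \<alpha> \<beta> xs (Suc (Suc i)) =
    bind_pmf (map_pmf (\<lambda>bs. (bs ! i, bs ! Suc i)) (Bjumps q a \<beta> 1 None False xs))
      (\<lambda>(b\<^sub>1, b\<^sub>2). BG_fiber q (a (Suc (Suc i))) \<alpha> (xs ! i) (xs ! Suc i) b\<^sub>1 b\<^sub>2)"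
  unfolding BG_pair_def Bmove_def bind_map_pmf
proof (rule bind_pmf_cong[OF refl])
  fix bs
  assume bs: "bs \<in> set_pmf (Bjumps q a \<beta> 1 None False xs)"
  define ys where "ys = map2 (\<lambda>x b. x + (if b then 1 else 0)) xs bs"
  have "1 \<le> Suc (Suc i)" "Suc (Suc i) \<le> length ys"
    using assms bs by (simp_all add: ys_def length_Bjumps)
  from bind_Gmove_pos[OF this, where f = "\<lambda>p. return_pmf (epos ys (Suc i), p)"]
  have "bind_pmf (Gmove q a \<alpha> ys) (\<lambda>ys'. return_pmf (epos ys (Suc i), pos ys' (Suc (Suc i)))) =
      map_pmf (\<lambda>j. (epos ys (Suc i), ys ! Suc i + int j))
        (geo_pmf q (gap (epos ys (Suc i)) (ys ! Suc i)) (a (Suc (Suc i)) * \<alpha>))"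
    by (simp add: map_pmf_def)
  moreover have "epos ys (Suc i) = Some (xs ! i + of_bool (bs ! i))" "ys ! Suc i = xs ! Suc i + of_bool (bs ! Suc i)"
    using assms bs unfolding ys_def by (simp_all add: epos_Bmove_support nth_Bmove_support)
  ultimately show "bind_pmf (Gmove q a \<alpha> ys) (\<lambda>ys'. return_pmf (epos ys (Suc (Suc i) - 1), pos ys' (Suc (Suc i)))) =
      (\<lambda>(b\<^sub>1, b\<^sub>2). BG_fiber q (a (Suc (Suc i))) \<alpha> (xs ! i) (xs ! Suc i) b\<^sub>1 b\<^sub>2) (bs ! i, bs ! Suc i)"
    by (simp add: BG_fiber_def)
qed

lemma dagger_pair_eq_BG_pair_first:
  assumes "xs \<noteq> []"
  shows "dagger_pair q a \<alpha> \<beta> xs 1 = BG_pair q a \<alpha> \<beta> xs 1"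
proof -
  obtain x xs' where xs: "xs = x # xs'"
    using assms by (cases xs) auto
  define c where "c = a 1 * \<beta> / (1 + a 1 * \<beta>)"
  define G where "G = geo_pmf q \<infinity> (a 1 * \<alpha>)"
  have m: "1 \<le> (1::nat)" "1 \<le> length xs"
    using xs by simp_all
  have "dagger_pair q a \<alpha> \<beta> xs 1 = bind_pmf G (\<lambda>j. map_pmf (\<lambda>b. (None, x + int j + of_bool b)) (bernoulli_pmf c))"
    unfolding dagger_pair_eq_geo[OF m] using Lweight_infinity[of q \<beta> "a 1" "\<alpha> * a 1"]
    by (simp add: xs epos_def gap_def c_def G_def map_pmf_def of_bool_def)
  also have "\<dots> = bind_pmf (bernoulli_pmf c) (\<lambda>b. map_pmf (\<lambda>j. (None, x + of_bool b + int j)) G)"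
    unfolding map_pmf_def by (subst bind_commute_pmf) (simp add: algebra_simps)
  also have "\<dots> = bind_pmf (map_pmf (\<lambda>bs. bs ! 0) (Bjumps q a \<beta> 1 None False xs))
      (\<lambda>b. map_pmf (\<lambda>j. (None, x + of_bool b + int j)) G)"
    unfolding xs Bjumps_nth_0 c_def by simp
  also have "\<dots> = BG_pair q a \<alpha> \<beta> xs 1"
    unfolding BG_pair_def Bmove_def bind_map_pmf
  proof (rule bind_pmf_cong[OF refl])
    fix bs
    assume bs: "bs \<in> set_pmf (Bjumps q a \<beta> 1 None False xs)"
    define ys where "ys = map2 (\<lambda>x b. x + (if b then 1 else 0)) xs bs"
    have "1 \<le> (1::nat)" "1 \<le> length ys"
      using xs length_Bjumps[OF bs] by (simp_all add: ys_def)
    from bind_Gmove_pos[OF this, where f = "\<lambda>p. return_pmf (epos ys 0, p)"]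
    show "map_pmf (\<lambda>j. (None, x + of_bool (bs ! 0) + int j)) G =
        bind_pmf (Gmove q a \<alpha> ys) (\<lambda>ys'. return_pmf (epos ys (1 - 1), pos ys' 1))"
      using nth_Bmove_support[OF bs, of 0] xs
      by (simp add: ys_def epos_def gap_def G_def map_pmf_def)
  qed
  finally show ?thesis .
qed

lemma dagger_pair_eq_BG_pair_Suc_Suc:
  assumes q: "0 < q" "q < 1" and \<gamma>: "0 \<le> a (Suc (Suc i)) * \<alpha>" "a (Suc (Suc i)) * \<alpha> < 1"
    and c: "0 \<le> a (Suc (Suc i)) * \<beta>" and i: "Suc i < length xs" and gap: "xs ! Suc i < xs ! i"
  shows "dagger_pair q a \<alpha> \<beta> xs (Suc (Suc i)) = BG_pair q a \<alpha> \<beta> xs (Suc (Suc i))"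
proof -
  define B where "B = Bjumps q a \<beta> 1 None False xs"
  define p where "p = (\<lambda>b\<^sub>1. (if b\<^sub>1 then 1 else 1 - q ^ nat (xs ! i - xs ! Suc i - 1))
      * (a (Suc (Suc i)) * \<beta> / (1 + a (Suc (Suc i)) * \<beta>)))"
  have "dagger_pair q a \<alpha> \<beta> xs (Suc (Suc i)) =
      bind_pmf (map_pmf (\<lambda>bs. bs ! i) B) (dagger_fiber q (a (Suc (Suc i))) \<alpha> \<beta> (xs ! i) (xs ! Suc i))"
    unfolding B_def using i by (rule dagger_pair_Suc_Suc)
  also have "\<dots> = bind_pmf (map_pmf (\<lambda>bs. bs ! i) B)
      (\<lambda>b\<^sub>1. bind_pmf (bernoulli_pmf (p b\<^sub>1)) (BG_fiber q (a (Suc (Suc i))) \<alpha> (xs ! i) (xs ! Suc i) b\<^sub>1))"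
    unfolding p_def dagger_fiber_eq_bind_BG_fiber[OF q \<gamma> c gap] ..
  also have "\<dots> = bind_pmf (map_pmf (\<lambda>bs. (bs ! i, bs ! Suc i)) B)
      (\<lambda>(b\<^sub>1, b\<^sub>2). BG_fiber q (a (Suc (Suc i))) \<alpha> (xs ! i) (xs ! Suc i) b\<^sub>1 b\<^sub>2)"
    unfolding B_def Bjumps_nth_pair[OF i] p_def
    by (simp add: bind_assoc_pmf bind_map_pmf map_pmf_def bind_return_pmf)
  also have "\<dots> = BG_pair q a \<alpha> \<beta> xs (Suc (Suc i))"
    unfolding B_def using i by (rule BG_pair_Suc_Suc[symmetric])
  finally show ?thesis .
qed

theorem proposition5p10:
  fixes q \<alpha> \<beta> :: real and a :: "nat \<Rightarrow> real" and L m :: nat and xs :: "int list"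
  assumes "0 < q" "q < 1"
    and "L \<ge> 1"
    and "\<And>i. i \<in> {1..L} \<Longrightarrow> a i > 0"
    and "\<alpha> > 0" "\<beta> > 0"
    and "\<And>i. i \<in> {1..L} \<Longrightarrow> \<alpha> * a i < 1"
    and "config L xs"
    and "m \<in> {1..L}"
  shows "dagger_pair q a \<alpha> \<beta> xs m = BG_pair q a \<alpha> \<beta> xs m"
proof -
  have len: "length xs = L" and sorted: "sorted_wrt (>) xs"
    using \<open>config L xs\<close> by (simp_all add: config_def)
  consider "m = 1" | i where "m = Suc (Suc i)"
    using \<open>m \<in> {1..L}\<close> by (metis atLeastAtMost_iff not0_implies_Suc not_one_le_zero One_nat_def)
  then show ?thesis
  proof cases
    case 1
    from len \<open>L \<ge> 1\<close> have "xs \<noteq> []"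
      by auto
    then show ?thesis
      unfolding 1 by (rule dagger_pair_eq_BG_pair_first)
  next
    case (2 i)
    with \<open>m \<in> {1..L}\<close> len have i: "Suc i < length xs"
      by simp
    with sorted have gap: "xs ! Suc i < xs ! i"
      using sorted_wrt_nth_less[of "(>)" xs i "Suc i"] by simp
    have "0 < a m" "\<alpha> * a m < 1"
      using assms(4,7) \<open>m \<in> {1..L}\<close> by blast+
    then have rates: "0 \<le> a m * \<alpha>" "a m * \<alpha> < 1" "0 \<le> a m * \<beta>"
      using \<open>\<alpha> > 0\<close> \<open>\<beta> > 0\<close> by (simp_all add: mult.commute)
    show ?thesis
      using dagger_pair_eq_BG_pair_Suc_Suc[where a = a and i = i, OF \<open>0 < q\<close> \<open>q < 1\<close> rates[unfolded 2] i gap] 2 by simp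
  qed
qed

end
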